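(* Let $\mathcal{E}=(E,\leq,\sharp)$ be a prime event structure and let $e,e'\in E$ be concurrent, $e\,||\,e'$. Then there exists a configuration $C$ of $\mathcal{E}$ and processes $P_1,P_2,P_3,P_4$ such that $\emptyset\triangleright\textsc{espsi}(\mathcal{E},C)\xrightarrow{\overline{e}e}P_1$, $\emptyset\triangleright P_1\xrightarrow{\overline{e'}e'}P_2$, $\emptyset\triangleright\textsc{espsi}(\mathcal{E},C)\xrightarrow{\overline{e'}e'}P_3$, $\emptyset\triangleright P_3\xrightarrow{\overline{e}e}P_4$, and $P_2=P_4$.
   Context: A prime event structure is a triple $\mathcal{E}=(E,\leq,\sharp)$ where $E$ is a set of events (names from a nominal set), $\leq$ is a partial order on $E$ with $\{d\mid d\leq e\}$ finite for every $e$, and $\sharp$ is an irreflexive symmetric relation on $E$ with conflict heredity ($d\leq e$ and $d\sharp f$ imply $e\sharp f$). Two events are concurrent, $d\,||\,e$, iff none of $d\leq e$, $e\leq d$, $d\sharp e$ holds. A configuration is a finite, conflict-free, downward-closed subset of $E$. Psi-calculus fragment. Processes: assertion processes $(\!|\Psi|\!)$, output prefixes $\overline{M}\langle N\rangle.P$, case processes $\mathbf{case}\ \varphi_1:P_1,\dots,\varphi_n:P_n$, and parallel compositions (also of infinite families). Frames: $\mathcal{F}((\!|\Psi|\!))=\Psi$, $\mathcal{F}(P\mid Q)=\mathcal{F}(P)\otimes\mathcal{F}(Q)$ (composition over all components for families), and the frame of prefixed and case processes is the unit $\mathbf{1}$. Transitions $\Psi\triangleright P\xrightarrow{\alpha}P'$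 are generated by: (Out) if $\Psi\vdash M\leftrightarrow K$ then $\Psi\triangleright\overline{M}\langle N\rangle.P\xrightarrow{\overline{K}N}P$; (Case) if $\Psi\triangleright P_i\xrightarrow{\alpha}P'$ and $\Psi\vdash\varphi_i$ then $\Psi\triangleright\mathbf{case}\ \tilde\varphi:\tilde P\xrightarrow{\alpha}P'$; (Par) if $\Psi\otimes\mathcal{F}(Q)\triangleright P\xrightarrow{\alpha}P'$ then $\Psi\triangleright P\mid Q\xrightarrow{\alpha}P'\mid Q$, symmetrically for $Q$, and for a parallel family one component moves in context $\Psi$ composed with the frames of all other components, the others remaining unchanged. Assertion processes have no transitions. Event-psi instance over $E$: terms are elements of $E$; conditions are pairs $(L,R)$ of subsets of $E$; assertions are subsets of $E$; $\otimes=\cup$; $\mathbf{1}=\emptyset$; entailment: $\Psi\vdash(L,R)$ iff $L\subseteq\Psi$ and $\Psi\cap R=\emptyset$, and $\Psi\vdash a\leftrightarrow b$ iff $a=b$. Translation: $\textsc{espsi}(\mathcal{E},C)=\big|_{e\in E}P_e$ where $P_e=(\!|\{e\}|\!)$ if $e\in C$ and otherwise $P_e=\mathbf{case}\ \varphi_e:\overline{e}\langle e\rangle.(\!|\{e\}|\!)$, with $\varphi_e=(\{d\in E\mid d\leq e,\ d\neq e\},\{d\in E\mid d\sharp e\})$. Processes are compared as $E$-indexed parallel families. The paper writes the transition labelled $\overline{e}e$ simply as $\xrightarrow{e}$. *)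

theory Defs
  imports Main
begin

definition pes :: "'a set \<Rightarrow> ('a \<Rightarrow> 'a \<Rightarrow> bool) \<Rightarrow> ('a \<Rightarrow> 'a \<Rightarrow> bool) \<Rightarrow> bool" where
  "pes E leq confl \<longleftrightarrow>
     (\<forall>d e. leq d e \<longrightarrow> d \<in> E \<and> e \<in> E) \<and>
     (\<forall>d e. confl d e \<longrightarrow> d \<in> E \<and> e \<in> E) \<and>
     (\<forall>e\<in>E. leq e e) \<and>
     (\<forall>d e f. leq d e \<longrightarrow> leq e f \<longrightarrow> leq d f) \<and>
     (\<forall>d e. leq d e \<longrightarrow> leq e d \<longrightarrow> d = e) \<and>
     (\<forall>e\<in>E. finite {d. leq d e}) \<and>
     (\<forall>e. \<not> confl e e) \<and>
     (\<forall>d e. confl d e \<longrightarrow> confl e d) \<and>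
     (\<forall>d e f. leq d e \<longrightarrow> confl d f \<longrightarrow> confl e f)"

definition concurrent :: "('a \<Rightarrow> 'a \<Rightarrow> bool) \<Rightarrow> ('a \<Rightarrow> 'a \<Rightarrow> bool) \<Rightarrow> 'a \<Rightarrow> 'a \<Rightarrow> bool" where
  "concurrent leq confl d e \<longleftrightarrow> \<not> leq d e \<and> \<not> leq e d \<and> \<not> confl d e"

definition configuration :: "'a set \<Rightarrow> ('a \<Rightarrow> 'a \<Rightarrow> bool) \<Rightarrow> ('a \<Rightarrow> 'a \<Rightarrow> bool) \<Rightarrow> 'a set \<Rightarrow> bool" where
  "configuration E leq confl C \<longleftrightarrow>
     C \<subseteq> E \<and> finite C \<and>
     (\<forall>d\<in>C. \<forall>e\<in>C. \<not> confl d e) \<and>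
     (\<forall>e\<in>C. \<forall>d. leq d e \<longrightarrow> d \<in> C)"

text \<open>Terms are events ('a), assertions are sets of events, conditions are pairs (L,R) of
  sets of events.\<close>

datatype 'a proc =
    Assn "'a set"
  | Out 'a 'a "'a proc"
  | Case "(('a set \<times> 'a set) \<times> 'a proc) list"
  | Par "'a proc" "'a proc"
  | Fam "'a set" "'a \<Rightarrow> 'a proc"

primrec frame :: "'a proc \<Rightarrow> 'a set" where
  "frame (Assn \<Psi>) = \<Psi>"
| "frame (Out M N P) = {}"
| "frame (Case cs) = {}"
| "frame (Par P Q) = frame P \<union> frame Q"
| "frame (Fam I f) = (\<Union>i\<in>I. (frame \<circ> f) i)"

definition entails_cond :: "'a set \<Rightarrow> ('a set \<times> 'a set) \<Rightarrow> bool" where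
  "entails_cond \<Psi> \<phi> \<longleftrightarrow> fst \<phi> \<subseteq> \<Psi> \<and> \<Psi> \<inter> snd \<phi> = {}"

definition chan_eq :: "'a set \<Rightarrow> 'a \<Rightarrow> 'a \<Rightarrow> bool" where
  "chan_eq \<Psi> a b \<longleftrightarrow> a = b"

text \<open>Transitions \<Psi> \<triangleright> P --(K,N)--> P', where the label (K,N) is the output K-bar N.\<close>

inductive trans :: "'a set \<Rightarrow> 'a proc \<Rightarrow> 'a \<times> 'a \<Rightarrow> 'a proc \<Rightarrow> bool" where
  OutR: "chan_eq \<Psi> M K \<Longrightarrow> trans \<Psi> (Out M N P) (K, N) P"
| CaseR: "i < length cs \<Longrightarrow> cs ! i = (\<phi>, P) \<Longrightarrow> trans \<Psi> P \<alpha> P' \<Longrightarrow> entails_cond \<Psi> \<phi>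
          \<Longrightarrow> trans \<Psi> (Case cs) \<alpha> P'"
| ParL: "trans (\<Psi> \<union> frame Q) P \<alpha> P' \<Longrightarrow> trans \<Psi> (Par P Q) \<alpha> (Par P' Q)"
| ParR: "trans (\<Psi> \<union> frame P) Q \<alpha> Q' \<Longrightarrow> trans \<Psi> (Par P Q) \<alpha> (Par P Q')"
| FamR: "i \<in> I \<Longrightarrow> trans (\<Psi> \<union> (\<Union>j\<in>I - {i}. frame (f j))) (f i) \<alpha> P'
          \<Longrightarrow> trans \<Psi> (Fam I f) \<alpha> (Fam I (f(i := P')))"

definition precond :: "'a set \<Rightarrow> ('a \<Rightarrow> 'a \<Rightarrow> bool) \<Rightarrow> ('a \<Rightarrow> 'a \<Rightarrow> bool) \<Rightarrow> 'a \<Rightarrow> 'a set \<times> 'a set" where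
  "precond E leq confl e = ({d\<in>E. leq d e \<and> d \<noteq> e}, {d\<in>E. confl d e})"

definition espsi :: "'a set \<Rightarrow> ('a \<Rightarrow> 'a \<Rightarrow> bool) \<Rightarrow> ('a \<Rightarrow> 'a \<Rightarrow> bool) \<Rightarrow> 'a set \<Rightarrow> 'a proc" where
  "espsi E leq confl C =
     Fam E (\<lambda>e. if e \<in> C then Assn {e}
                else Case [(precond E leq confl e, Out e e (Assn {e}))])"

end

theory Submission
  imports Defs
begin

text \<open>Every configuration C determines the state espsi C of the translation, and an event e
  that can extend C to the configuration C \<union> {e} is fired by the single transition
  espsi C \<rightarrow> espsi (C \<union> {e}): the frame of the other components is exactly C, which entails the
  precondition of e. For concurrent e and e', take C to be the strict past of {e, e'}; then
  C, C \<union> {e}, C \<union> {e'} and C \<union> {e, e'} are all configurations, so both interleavings exist and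
  end in the same state espsi (C \<union> {e, e'}).\<close>

lemma
  assumes "pes E leq confl"
  shows pes_leq_in_carrier: "leq d e \<Longrightarrow> d \<in> E"
    and pes_leq_refl: "e \<in> E \<Longrightarrow> leq e e"
    and pes_leq_trans: "leq d e \<Longrightarrow> leq e f \<Longrightarrow> leq d f"
    and pes_leq_antisym: "leq d e \<Longrightarrow> leq e d \<Longrightarrow> d = e"
    and pes_finite_past: "e \<in> E \<Longrightarrow> finite {d. leq d e}"
    and pes_confl_irrefl: "\<not> confl e e"
    and pes_confl_sym: "confl d e \<Longrightarrow> confl e d"
    and pes_confl_hereditary: "leq d e \<Longrightarrow> confl d f \<Longrightarrow> confl e f"
  using assms unfolding pes_def by blast+

definition strict_past :: "('a \<Rightarrow> 'a \<Rightarrow> bool) \<Rightarrow> 'a set \<Rightarrow> 'a set" where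
  "strict_past leq X = {d. \<exists>x\<in>X. leq d x \<and> d \<noteq> x}"

lemma pes_no_conflict_below:
  assumes pes: "pes E leq confl" and conflict_free: "\<forall>x\<in>X. \<forall>y\<in>X. \<not> confl x y"
    and "x \<in> X" "leq d x" and "y \<in> X" "leq d' y"
  shows "\<not> confl d d'"
  using assms pes_confl_hereditary[OF pes] pes_confl_sym[OF pes] by metis

lemma configuration_Un_strict_past:
  assumes pes: "pes E leq confl" and "X \<subseteq> E" and "finite X"
    and conflict_free: "\<forall>x\<in>X. \<forall>y\<in>X. \<not> confl x y" and "Y \<subseteq> X"
  shows "configuration E leq confl (Y \<union> strict_past leq X)"
  unfolding configuration_def
proof (intro conjI ballI allI impI)
  have below: "Y \<union> strict_past leq X \<subseteq> (\<Union>x\<in>X. {d. leq d x})"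
    using \<open>Y \<subseteq> X\<close> \<open>X \<subseteq> E\<close> pes_leq_refl[OF pes] unfolding strict_past_def by blast
  then show "Y \<union> strict_past leq X \<subseteq> E"
    using pes_leq_in_carrier[OF pes] by blast
  have "finite (\<Union>x\<in>X. {d. leq d x})"
    using pes_finite_past[OF pes] \<open>X \<subseteq> E\<close> \<open>finite X\<close> by blast
  with below show "finite (Y \<union> strict_past leq X)"
    by (rule finite_subset)
  fix d d' assume "d \<in> Y \<union> strict_past leq X" and "d' \<in> Y \<union> strict_past leq X"
  with below show "\<not> confl d d'"
    using pes_no_conflict_below[OF pes conflict_free] by blast
next
  fix y d assume "y \<in> Y \<union> strict_past leq X" and "leq d y"
  then consider "y \<in> Y" | x where "x \<in> X" "leq y x" "y \<noteq> x"
    unfolding strict_past_def by blast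
  then show "d \<in> Y \<union> strict_past leq X"
  proof cases
    case 1
    then show ?thesis
      using \<open>leq d y\<close> \<open>Y \<subseteq> X\<close> unfolding strict_past_def by blast
  next
    case (2 x)
    then have "d \<noteq> x"
      using \<open>leq d y\<close> pes_leq_antisym[OF pes] pes_leq_trans[OF pes] by metis
    then show ?thesis
      using 2 \<open>leq d y\<close> pes_leq_trans[OF pes] unfolding strict_past_def by blast
  qed
qed

lemma UN_frame_others_eq:
  assumes "C \<subseteq> E" and "e \<notin> C" and frame_g: "\<And>j. frame (g j) = (if j \<in> C then {j} else {})"
  shows "(\<Union>j\<in>E - {e}. frame (g j)) = C"
proof
  have "frame (g j) \<subseteq> C" for j
    unfolding frame_g by simp
  then show "(\<Union>j\<in>E - {e}. frame (g j)) \<subseteq> C"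
    by blast
  show "C \<subseteq> (\<Union>j\<in>E - {e}. frame (g j))"
  proof
    fix x assume "x \<in> C"
    then have "x \<in> frame (g x)" and "x \<in> E - {e}"
      using assms(1,2) unfolding frame_g by auto
    then show "x \<in> (\<Union>j\<in>E - {e}. frame (g j))"
      by blast
  qed
qed

lemma trans_espsi_insert:
  assumes "e \<in> E" and "e \<notin> C" and conf: "configuration E leq confl (insert e C)"
  shows "trans {} (espsi E leq confl C) (e, e) (espsi E leq confl (insert e C))"
proof -
  define g where "g C' x = (if x \<in> C' then Assn {x}
                            else Case [(precond E leq confl x, Out x x (Assn {x}))])" for C' x
  have "C \<subseteq> E"
    using conf unfolding configuration_def by blast
  then have frame_others: "(\<Union>j\<in>E - {e}. frame (g C j)) = C"
    using \<open>e \<notin> C\<close> by (rule UN_frame_others_eq) (simp add: g_def)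
  have "{d\<in>E. leq d e \<and> d \<noteq> e} \<subseteq> C" and "C \<inter> {d\<in>E. confl d e} = {}"
    using conf unfolding configuration_def by blast+
  then have entails: "entails_cond C (precond E leq confl e)"
    unfolding entails_cond_def precond_def by simp
  have "trans C (Case [(precond E leq confl e, Out e e (Assn {e}))]) (e, e) (Assn {e})"
    by (rule CaseR[where i = 0]) (auto intro: OutR simp: chan_eq_def entails)
  then have "trans ({} \<union> (\<Union>j\<in>E - {e}. frame (g C j))) (g C e) (e, e) (Assn {e})"
    unfolding frame_others using \<open>e \<notin> C\<close> by (simp add: g_def)
  then have "trans {} (Fam E (g C)) (e, e) (Fam E ((g C)(e := Assn {e})))"
    using \<open>e \<in> E\<close> by (rule FamR[rotated])
  moreover have "(g C)(e := Assn {e}) = g (insert e C)"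
    unfolding g_def by (rule ext) simp
  ultimately show ?thesis
    unfolding espsi_def g_def by simp
qed

lemma trans_espsi_diamond:
  assumes "e \<in> E" "e' \<in> E" and "e \<noteq> e'" and "e \<notin> C" "e' \<notin> C"
    and "configuration E leq confl (insert e C)" "configuration E leq confl (insert e' C)"
    and conf_both: "configuration E leq confl (insert e' (insert e C))"
  shows "\<exists>P1 P2 P3 P4.
           trans {} (espsi E leq confl C) (e, e) P1 \<and>
           trans {} P1 (e', e') P2 \<and>
           trans {} (espsi E leq confl C) (e', e') P3 \<and>
           trans {} P3 (e, e) P4 \<and>
           P2 = P4"
proof (intro exI conjI)
  show "trans {} (espsi E leq confl C) (e, e) (espsi E leq confl (insert e C))"
    "trans {} (espsi E leq confl C) (e', e') (espsi E leq confl (insert e' C))"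
    using assms by (simp_all add: trans_espsi_insert)
  show "trans {} (espsi E leq confl (insert e C)) (e', e')
      (espsi E leq confl (insert e' (insert e C)))"
    using assms by (simp add: trans_espsi_insert)
  have "configuration E leq confl (insert e (insert e' C))"
    using conf_both by (simp add: insert_commute)
  then show "trans {} (espsi E leq confl (insert e' C)) (e, e)
      (espsi E leq confl (insert e (insert e' C)))"
    using assms by (simp add: trans_espsi_insert)
qed (simp add: insert_commute)

theorem mainTheorem3:
  assumes "pes E leq confl"
    and "e \<in> E" and "e' \<in> E"
    and "concurrent leq confl e e'"
  shows "\<exists>C P1 P2 P3 P4. configuration E leq confl C \<and>
           trans {} (espsi E leq confl C) (e, e) P1 \<and>
           trans {} P1 (e', e') P2 \<and>
           trans {} (espsi E leq confl C) (e', e') P3 \<and>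
           trans {} P3 (e, e) P4 \<and>
           P2 = P4"
proof -
  define C where "C = strict_past leq {e, e'}"
  have "e \<noteq> e'"
    using assms(2,4) pes_leq_refl[OF assms(1)] unfolding concurrent_def by blast
  have "e \<notin> C" and "e' \<notin> C"
    using assms(4) pes_leq_antisym[OF assms(1)] unfolding C_def strict_past_def concurrent_def
    by blast+
  have "\<forall>x\<in>{e, e'}. \<forall>y\<in>{e, e'}. \<not> confl x y"
    using assms(4) pes_confl_irrefl[OF assms(1)] pes_confl_sym[OF assms(1)]
    unfolding concurrent_def by blast
  then have conf: "configuration E leq confl (Y \<union> C)" if "Y \<subseteq> {e, e'}" for Y
    unfolding C_def using assms(2,3) that by (intro configuration_Un_strict_past[OF assms(1)]) auto
  have "configuration E leq confl C" "configuration E leq confl (insert e C)"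
    "configuration E leq confl (insert e' C)" "configuration E leq confl (insert e' (insert e C))"
    using conf[of "{}"] conf[of "{e}"] conf[of "{e'}"] conf[of "{e, e'}"]
    by (simp_all add: insert_commute)
  then show ?thesis
    using trans_espsi_diamond[OF assms(2,3) \<open>e \<noteq> e'\<close> \<open>e \<notin> C\<close> \<open>e' \<notin> C\<close>] by blast
qed

end
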